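(* Let $(X,<)$ be a Banach lattice with lattice norm $\|\cdot\|$, and let $A=(\alpha_{ij})_{i,j\in\mathbb{N}}$ be a regular matrix with non-negative entries. Then the $A$-convergence on $X$ preserves order-inequalities.
   Context: A non-negative matrix $A=(\alpha_{ij})$ is regular if $\sup_n\sum_j\alpha_{nj}<\infty$, $\lim_n\alpha_{ni}=0$ for each $i$, and $\lim_n\sum_i\alpha_{ni}=1$. A sequence $(x_j)$ in $X$ is $A$-convergent to $L$ (written $x_j\overset{A}{\longrightarrow}L$) if $\lim_n\sum_j\alpha_{nj}x_j=L$ in norm; the $A$-convergence is the summability method with domain $\mathcal{D}_A$ the $A$-convergent sequences. For $u\in X$, $|u|=u\vee(-u)$. A summability method $\mathcal{R}$ preserves order-inequalities if: whenever $(w_n),(x_n),(y_n),(z_n)\in\mathcal{D}_{\mathcal{R}}$, $w,x,y,z\in X$ and $C>0$ satisfy, for all $n$, $-C[(x_n-x)+(y_n-y)+(z_n-z)]<w_n-w<C[(x_n-x)+(y_n-y)+(z_n-z)]$ in the lattice order, and $x_n\overset{\mathcal{R}}{\longrightarrow}x$, $y_n\overset{\mathcal{R}}{\longrightarrow}y$, $z_n\overset{\mathcal{R}}{\longrightarrow}z$, then $w_n\overset{\mathcal{R}}{\longrightarrow}w$. *)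

theory Defs
  imports "HOL-Analysis.Analysis"
begin

text \<open>A (real) Banach lattice: a Banach space which is a vector lattice
  (Riesz space) whose norm is a lattice norm, i.e. the modulus
  \<open>|u| = sup u (-u)\<close> satisfies \<open>|u| \<le> |v| \<Longrightarrow> norm u \<le> norm v\<close>.\<close>

class banach_lattice = banach + ordered_real_vector + lattice +
  assumes lattice_norm: "sup u (- u) \<le> sup v (- v) \<Longrightarrow> norm u \<le> norm v"

definition regular_matrix :: "(nat \<Rightarrow> nat \<Rightarrow> real) \<Rightarrow> bool" where
  "regular_matrix \<alpha> \<longleftrightarrow>
     (\<forall>n. summable (\<alpha> n)) \<and> bdd_above (range (\<lambda>n. \<Sum>j. \<alpha> n j)) \<and>
     (\<forall>i. (\<lambda>n. \<alpha> n i) \<longlonglongrightarrow> 0) \<and>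
     (\<lambda>n. \<Sum>j. \<alpha> n j) \<longlonglongrightarrow> 1"

definition A_conv :: "(nat \<Rightarrow> nat \<Rightarrow> real) \<Rightarrow> (nat \<Rightarrow> 'a::real_normed_vector) \<Rightarrow> 'a \<Rightarrow> bool" where
  "A_conv \<alpha> x L \<longleftrightarrow>
     (\<forall>n. summable (\<lambda>j. \<alpha> n j *\<^sub>R x j)) \<and>
     (\<lambda>n. \<Sum>j. \<alpha> n j *\<^sub>R x j) \<longlonglongrightarrow> L"

text \<open>A summability method is given by its convergence relation \<open>R s L\<close>
  ("s is R-convergent to L"); its domain is the set of R-convergent sequences.\<close>
definition summability_domain :: "((nat \<Rightarrow> 'a) \<Rightarrow> 'a \<Rightarrow> bool) \<Rightarrow> (nat \<Rightarrow> 'a) set" where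
  "summability_domain R = {s. \<exists>L. R s L}"

definition preserves_order_inequalities ::
  "((nat \<Rightarrow> 'a::{ordered_ab_group_add, real_vector}) \<Rightarrow> 'a \<Rightarrow> bool) \<Rightarrow> bool" where
  "preserves_order_inequalities R \<longleftrightarrow>
     (\<forall>ws xs ys zs w x y z (C::real).
        ws \<in> summability_domain R \<and> xs \<in> summability_domain R \<and>
        ys \<in> summability_domain R \<and> zs \<in> summability_domain R \<and> C > 0 \<and>
        (\<forall>n. - (C *\<^sub>R ((xs n - x) + (ys n - y) + (zs n - z))) \<le> ws n - w \<and>
             ws n - w \<le> C *\<^sub>R ((xs n - x) + (ys n - y) + (zs n - z))) \<and>
        R xs x \<and> R ys y \<and> R zs z
        \<longrightarrow> R ws w)"

end

theory Submission
  imports Defs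
begin

(* Since A is non-negative, the order bound -C u_n <= w_n - w <= C u_n with
   u_n = (x_n - x) + (y_n - y) + (z_n - z) survives the A-transform row by row;
   the lattice norm turns it into a norm bound by C times the A-transform of u,
   which tends to 0 because the row sums of A tend to 1. *)

lemma norm_le_of_order_interval:
  fixes v a :: "'a::banach_lattice"
  assumes "- a \<le> v" "v \<le> a"
  shows "norm v \<le> norm a"
proof -
  have "sup v (- v) \<le> a" using assms by (simp add: minus_le_iff)
  also have "a \<le> sup a (- a)" by simp
  finally show ?thesis by (rule lattice_norm)
qed

lemma norm_suminf_le_of_order_interval:
  fixes u v :: "nat \<Rightarrow> 'a::banach_lattice"
  assumes nonneg: "\<And>j. a j \<ge> 0"
    and su: "summable (\<lambda>j. a j *\<^sub>R u j)" and sv: "summable (\<lambda>j. a j *\<^sub>R v j)"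
    and lower: "\<And>j. - u j \<le> v j" and upper: "\<And>j. v j \<le> u j"
  shows "norm (\<Sum>j. a j *\<^sub>R v j) \<le> norm (\<Sum>j. a j *\<^sub>R u j)"
proof (rule tendsto_le[OF trivial_limit_sequentially])
  show "(\<lambda>N. norm (\<Sum>j<N. a j *\<^sub>R u j)) \<longlonglongrightarrow> norm (\<Sum>j. a j *\<^sub>R u j)"
    using su by (intro tendsto_norm summable_LIMSEQ)
  show "(\<lambda>N. norm (\<Sum>j<N. a j *\<^sub>R v j)) \<longlonglongrightarrow> norm (\<Sum>j. a j *\<^sub>R v j)"
    using sv by (intro tendsto_norm summable_LIMSEQ)
  show "\<forall>\<^sub>F N in sequentially. norm (\<Sum>j<N. a j *\<^sub>R v j) \<le> norm (\<Sum>j<N. a j *\<^sub>R u j)"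
  proof (intro always_eventually allI norm_le_of_order_interval)
    fix N
    show "- (\<Sum>j<N. a j *\<^sub>R u j) \<le> (\<Sum>j<N. a j *\<^sub>R v j)"
      unfolding sum_negf[symmetric] scaleR_minus_right[symmetric]
      using nonneg lower by (intro sum_mono scaleR_left_mono)
    show "(\<Sum>j<N. a j *\<^sub>R v j) \<le> (\<Sum>j<N. a j *\<^sub>R u j)"
      using nonneg upper by (intro sum_mono scaleR_left_mono)
  qed
qed

lemma A_conv_add:
  assumes "A_conv \<alpha> xs x" "A_conv \<alpha> ys y"
  shows "A_conv \<alpha> (\<lambda>j. xs j + ys j) (x + y)"
  using assms unfolding A_conv_def
  by (simp add: scaleR_right_distrib summable_add suminf_add[symmetric] tendsto_add)

lemma A_conv_diff:
  assumes "A_conv \<alpha> xs x" "A_conv \<alpha> ys y"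
  shows "A_conv \<alpha> (\<lambda>j. xs j - ys j) (x - y)"
  using assms unfolding A_conv_def
  by (simp add: scaleR_right_diff_distrib summable_diff suminf_diff[symmetric] tendsto_diff)

lemma A_conv_scaleR:
  assumes "A_conv \<alpha> xs x"
  shows "A_conv \<alpha> (\<lambda>j. c *\<^sub>R xs j) (c *\<^sub>R x)"
proof -
  have sums: "summable (\<lambda>j. \<alpha> n j *\<^sub>R xs j)" for n
    using assms unfolding A_conv_def by auto
  have lim: "(\<lambda>n. \<Sum>j. \<alpha> n j *\<^sub>R xs j) \<longlonglongrightarrow> x"
    using assms unfolding A_conv_def by auto
  have commute: "\<alpha> n j *\<^sub>R (c *\<^sub>R xs j) = c *\<^sub>R (\<alpha> n j *\<^sub>R xs j)" for n j
    by (rule scaleR_left_commute)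
  show ?thesis
    unfolding A_conv_def commute using sums lim
    by (simp add: summable_scaleR_right suminf_scaleR_right[symmetric] tendsto_scaleR
        del: scaleR_scaleR)
qed

lemma A_conv_const:
  assumes "regular_matrix \<alpha>"
  shows "A_conv \<alpha> (\<lambda>_. c) c"
proof -
  have "\<And>n. summable (\<alpha> n)" and "(\<lambda>n. \<Sum>j. \<alpha> n j) \<longlonglongrightarrow> 1"
    using assms unfolding regular_matrix_def by auto
  then have "(\<lambda>n. (\<Sum>j. \<alpha> n j) *\<^sub>R c) \<longlonglongrightarrow> 1 *\<^sub>R c"
    by (intro tendsto_scaleR tendsto_const)
  with \<open>\<And>n. summable (\<alpha> n)\<close> show ?thesis
    unfolding A_conv_def by (simp add: summable_scaleR_left suminf_scaleR_left)
qed

lemma A_conv_zero_of_order_interval: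
  fixes u v :: "nat \<Rightarrow> 'a::banach_lattice"
  assumes nonneg: "\<And>n j. \<alpha> n j \<ge> 0" and u: "A_conv \<alpha> u 0"
    and sv: "\<And>n. summable (\<lambda>j. \<alpha> n j *\<^sub>R v j)"
    and lower: "\<And>j. - u j \<le> v j" and upper: "\<And>j. v j \<le> u j"
  shows "A_conv \<alpha> v 0"
proof -
  have su: "summable (\<lambda>j. \<alpha> n j *\<^sub>R u j)" for n
    using u unfolding A_conv_def by blast
  have bound: "\<forall>n. norm (\<Sum>j. \<alpha> n j *\<^sub>R v j) \<le> norm (\<Sum>j. \<alpha> n j *\<^sub>R u j)"
    using norm_suminf_le_of_order_interval[OF nonneg su sv lower upper] by blast
  have "(\<lambda>n. norm (\<Sum>j. \<alpha> n j *\<^sub>R u j)) \<longlonglongrightarrow> 0"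
    using u unfolding A_conv_def by (simp add: tendsto_norm_zero)
  then have "(\<lambda>n. \<Sum>j. \<alpha> n j *\<^sub>R v j) \<longlonglongrightarrow> 0"
    by (rule Lim_null_comparison[OF always_eventually[OF bound]])
  with sv show ?thesis unfolding A_conv_def by simp
qed

theorem theorem3p8:
  fixes \<alpha> :: "nat \<Rightarrow> nat \<Rightarrow> real"
  assumes "regular_matrix \<alpha>"
    and "\<And>i j. \<alpha> i j \<ge> 0"
  shows "preserves_order_inequalities (A_conv \<alpha> :: (nat \<Rightarrow> 'a::banach_lattice) \<Rightarrow> 'a \<Rightarrow> bool)"
  unfolding preserves_order_inequalities_def
proof (intro allI impI, elim conjE)
  fix ws xs ys zs :: "nat \<Rightarrow> 'a" and w x y z :: 'a and C :: real
  assume "ws \<in> summability_domain (A_conv \<alpha>)"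
    and bounds: "\<forall>n. - (C *\<^sub>R ((xs n - x) + (ys n - y) + (zs n - z))) \<le> ws n - w \<and>
             ws n - w \<le> C *\<^sub>R ((xs n - x) + (ys n - y) + (zs n - z))"
    and "A_conv \<alpha> xs x" "A_conv \<alpha> ys y" "A_conv \<alpha> zs z"
  note A_conv_rules = A_conv_add A_conv_diff A_conv_scaleR A_conv_const[OF assms(1)]
  have "A_conv \<alpha> (\<lambda>n. C *\<^sub>R ((xs n - x) + (ys n - y) + (zs n - z)))
      (C *\<^sub>R ((x - x) + (y - y) + (z - z)))"
    by (intro A_conv_rules) fact+
  then have u: "A_conv \<alpha> (\<lambda>n. C *\<^sub>R ((xs n - x) + (ys n - y) + (zs n - z))) 0"
    by simp
  obtain L where "A_conv \<alpha> ws L"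
    using \<open>ws \<in> summability_domain (A_conv \<alpha>)\<close> unfolding summability_domain_def by blast
  then have "A_conv \<alpha> (\<lambda>n. ws n - w) (L - w)"
    by (intro A_conv_rules)
  then have "summable (\<lambda>j. \<alpha> n j *\<^sub>R (ws j - w))" for n
    unfolding A_conv_def by blast
  then have "A_conv \<alpha> (\<lambda>n. ws n - w) 0"
    using bounds by (intro A_conv_zero_of_order_interval[OF assms(2) u]) auto
  then have "A_conv \<alpha> (\<lambda>n. (ws n - w) + w) (0 + w)"
    by (intro A_conv_rules)
  then show "A_conv \<alpha> ws w" by simp
qed

end
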